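(* Consider the multi-class loss system described in the context, with $C$ classes, arrival rates $\boldsymbol{\lambda}=(\lambda_1,\dots,\lambda_C)$, bandwidth vector $\mathbf{h}=(h_1,\dots,h_C)$, transmission-duration vector $\mathbf{s}=(s_1,\dots,s_C)$ and total bandwidth $W$. Fix a positive integer $q$ and an index $i\in\{1,\dots,C\}$, and define $$\mathbf{h}':=(h_1,\dots,h_{i-1},h_i/q,h_{i+1},\dots,h_C),\qquad \mathbf{s}':=(s_1,\dots,s_{i-1},q s_i,s_{i+1},\dots,s_C).$$ If $\rho_i:=\lambda_i s_i<1$, then for every class $c\in\{1,\dots,C\}$ there exists $\tilde W_c$ such that for all $W>\tilde W_c$, $$P^{B}_c(\mathbf{h},\mathbf{s},\boldsymbol{\lambda},W)\;\ge\;P^{B}_c(\mathbf{h}',\mathbf{s}',\boldsymbol{\lambda},W).$$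
   Context: Multi-class loss system (one-shot transmission model with immediate scheduling): there are $C$ classes of packets. Class-$c$ packets arrive according to independent Poisson processes of rate $\lambda_c>0$. An admitted class-$c$ packet occupies bandwidth $h_c>0$ for a deterministic duration $s_c>0$ and then leaves. The total available bandwidth is $W>0$. Let $N_{c'}(t)$ be the number of class-$c'$ packets in transmission at time $t$. A class-$c$ packet arriving at time $t$ is admitted immediately if $h_c+\sum_{c'=1}^C h_{c'}N_{c'}(t)\le W$; otherwise it is blocked (lost). Admitted packets are never preempted. Write $\rho_c:=\lambda_c s_c$. The stationary distribution of $\mathbf{N}=(N_1,\dots,N_C)$ is the truncated product form $\pi(\mathbf{n})=G\prod_{c=1}^C \rho_c^{n_c}/n_c!$ on $\mathcal{S}=\{\mathbf{n}\in\mathbb{Z}_+^C:\sum_c h_c n_c\le W\}$, with $G$ the normalizing constant. The blocking probability of class $c$, $P^{B}_c(\mathbf{h},\mathbf{s},\boldsymbol{\lambda},W)$, is the probability that a typical class-$c$ arrival is blocked, i.e. (by PASTA) $$P^{B}_c(\mathbf{h},\mathbf{s},\boldsymbol{\lambda},W)=\frac{\sum_{\mathbf{n}\in\mathcal{S}:\,h_c+\sum_{c'}h_{c'}n_{c'}>W}\prod_{c'}\rho_{c'}^{n_{c'}}/n_{c'}!}{\sum_{\mathbf{n}\in\mathcal{S}}\prod_{c'}\rho_{c'}^{n_{c'}}/n_{c'}!}.$$ For the primed parameters $(\mathbf{h}',\mathbf{s}')$, the same definition is used with $h_i$ replaced by $h_i/q$ and $\rho_i$ replaced by $\lambda_i q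 s_i=q\rho_i$. *)

theory Defs
  imports "HOL-Analysis.Analysis"
begin

text \<open>Classes are indexed by 0..C-1. A state is a function n :: nat => nat
  that vanishes outside {..<C}. Vectors h, s, lambda are functions nat => real.\<close>

definition occupied :: "nat \<Rightarrow> (nat \<Rightarrow> real) \<Rightarrow> (nat \<Rightarrow> nat) \<Rightarrow> real" where
  "occupied C h n = (\<Sum>c<C. h c * real (n c))"

definition state_space :: "nat \<Rightarrow> (nat \<Rightarrow> real) \<Rightarrow> real \<Rightarrow> (nat \<Rightarrow> nat) set" where
  "state_space C h W = {n. (\<forall>c. C \<le> c \<longrightarrow> n c = 0) \<and> occupied C h n \<le> W}"

definition weight :: "nat \<Rightarrow> (nat \<Rightarrow> real) \<Rightarrow> (nat \<Rightarrow> nat) \<Rightarrow> real" where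
  "weight C \<rho> n = (\<Prod>c<C. \<rho> c ^ n c / fact (n c))"

text \<open>Blocking probability of class c (via PASTA), with loads rho_c = lambda_c * s_c.\<close>
definition blocking_prob ::
  "nat \<Rightarrow> nat \<Rightarrow> (nat \<Rightarrow> real) \<Rightarrow> (nat \<Rightarrow> real) \<Rightarrow> (nat \<Rightarrow> real) \<Rightarrow> real \<Rightarrow> real" where
  "blocking_prob C c h s lam W =
     (let \<rho> = (\<lambda>k. lam k * s k) in
       (\<Sum>n\<in>{n\<in>state_space C h W. h c + occupied C h n > W}. weight C \<rho> n)
       / (\<Sum>n\<in>state_space C h W. weight C \<rho> n))"

end

(*
  Write rho = lam * s for the loads, F(W) for the total weight of the state space and B(W) for
  the weight of the states that block class c, so that the blocking probability is B / F; the
  refined system has loads rho(i := q * rho i) and bandwidths h(i := h i / q), with weights F'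
  and B'.  Deleting the class-i packets of a state shows F <= exp (rho i) * F'.  The main step
  is that B'(W) = o(B(W)): every blocked state n of the refined system is sent to a blocked
  state of the original one whose weight is larger by any prescribed factor, with boundedly
  many states sharing an image.  If n_i is large, class i is compressed (n_i to n_i div q),
  which gains the superexponential ratio between rho^(j/q) / (j/q)! and (q rho)^j / j!;
  if n_c is large (c ~= i), class i is compressed and receives a few extra packets at the
  expense of class c; if both are small, a large W forces some third class to hold many
  packets, and removing one of them gains a large factor.  Hence B' / F' <= B / (exp (rho i) * F') <= B / F for large W.
*)

theory Submission
  imports Defs
begin

section \<open>Poisson terms\<close>

definition poisson_term :: "real \<Rightarrow> nat \<Rightarrow> real" where
  "poisson_term x k = x ^ k / fact k"

lemma poisson_term_pos: "x > 0 \<Longrightarrow> poisson_term x k > 0"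
  by (simp add: poisson_term_def)

lemma poisson_term_nonneg: "x \<ge> 0 \<Longrightarrow> poisson_term x k \<ge> 0"
  by (simp add: poisson_term_def)

lemma poisson_term_0 [simp]: "poisson_term x 0 = 1"
  by (simp add: poisson_term_def)

lemma poisson_term_Suc: "real (Suc k) * poisson_term x (Suc k) = x * poisson_term x k"
  by (simp add: poisson_term_def field_simps del: of_nat_Suc)

lemma sum_poisson_term_le_exp:
  assumes "x \<ge> 0" "finite K"
  shows "(\<Sum>k\<in>K. poisson_term x k) \<le> exp x"
proof -
  have "poisson_term x = (\<lambda>k. x ^ k /\<^sub>R fact k)"
    by (simp add: poisson_term_def fun_eq_iff divide_inverse_commute)
  then have sums: "poisson_term x sums exp x"
    using exp_converges[of x] by simp
  have "(\<Sum>k\<in>K. poisson_term x k) \<le> suminf (poisson_term x)"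
    using sums assms by (intro sum_le_suminf) (auto simp: sums_iff intro: poisson_term_nonneg)
  with sums show ?thesis
    by (simp add: sums_iff)
qed

lemma poisson_term_antimono:
  assumes "x > 0" "m \<le> l" "x \<le> real m + 1"
  shows "poisson_term x l \<le> poisson_term x m"
  using assms(2)
proof (induction l rule: dec_induct)
  case (step l)
  have "poisson_term x (Suc l) = poisson_term x l * (x / (real l + 1))"
    using poisson_term_Suc[of l x] by (simp add: field_simps)
  also have "\<dots> \<le> poisson_term x l"
    using assms step by (intro mult_left_le) (auto intro: less_imp_le poisson_term_pos)
  finally show ?case
    using step by linarith
qed simp

lemma poisson_term_drop_le:
  assumes "x > 0" "m < y" "x \<le> real m + 1" "K * x \<le> \<kappa> * real y" "\<kappa> \<ge> 0"
  shows "K * poisson_term x y \<le> \<kappa> * poisson_term x m"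
proof -
  obtain y' where y: "y = Suc y'"
    using assms(2) by (cases y) auto
  have "x * (K * poisson_term x y) \<le> \<kappa> * (real y * poisson_term x y)"
    using mult_right_mono[OF assms(4) poisson_term_nonneg[of x y]] assms(1) by (simp add: mult_ac)
  also have "\<dots> = x * (\<kappa> * poisson_term x y')"
    using poisson_term_Suc[of y' x] by (simp add: y mult.left_commute)
  also have "\<dots> \<le> x * (\<kappa> * poisson_term x m)"
    using poisson_term_antimono[of x m y'] assms y by (intro mult_left_mono) auto
  finally show ?thesis
    using assms(1) by simp
qed

lemma poisson_term_lower_bound:
  assumes "x > 0" "k \<le> B"
  shows "min 1 x ^ B / fact B \<le> poisson_term x k"
proof -
  have "min 1 x ^ B \<le> min 1 x ^ k"
    using assms by (intro power_decreasing) auto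
  also have "\<dots> \<le> x ^ k"
    using assms by (intro power_mono) auto
  finally show ?thesis
    unfolding poisson_term_def using assms by (intro frac_le) (auto simp: fact_mono)
qed

lemma poisson_term_upper_bound:
  assumes "x > 0" "k \<le> B"
  shows "poisson_term x k \<le> max 1 x ^ B"
proof -
  have "poisson_term x k \<le> x ^ k"
    unfolding poisson_term_def using assms by (simp add: divide_le_eq mult_le_cancel_left1)
  also have "\<dots> \<le> max 1 x ^ k"
    using assms by (intro power_mono) auto
  also have "\<dots> \<le> max 1 x ^ B"
    using assms by (intro power_increasing) auto
  finally show ?thesis .
qed

lemma fact_diff_mult_poisson_term_le:
  assumes "k \<le> j" "y \<ge> 0" "x > 0"
  shows "fact (j - k) * poisson_term y j \<le> y ^ j / x ^ k * poisson_term x k"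
proof -
  have "fact k * fact (j - k) \<le> (fact j :: nat)"
    by (rule dvd_imp_le[OF choose_dvd[OF assms(1)]]) simp
  then have "fact k * fact (j - k) \<le> (fact j :: real)"
    by (metis of_nat_fact of_nat_le_iff of_nat_mult)
  then have "fact k * fact (j - k) * y ^ j \<le> fact j * y ^ j"
    using assms(2) by (intro mult_right_mono) auto
  then show ?thesis
    using assms(3) by (simp add: poisson_term_def field_simps)
qed

lemma eventually_poisson_term_compression:
  fixes x G :: real
  assumes x: "x > 0" and q: "q \<ge> 2"
  shows "\<forall>\<^sub>F j in sequentially. G * poisson_term (real q * x) j \<le> poisson_term x (j div q + t)"
proof (cases "G > 0")
  case False
  then show ?thesis
    using x by (intro always_eventually allI order_trans[OF mult_nonpos_nonneg])
      (auto intro: poisson_term_nonneg)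
next
  case G: True
  define M where "M = max 1 (real q * x) * max 1 (1 / x)"
  have M: "M \<ge> 1"
    unfolding M_def by (metis max.cobounded1 mult_mono' mult_1 zero_le_one)
  have "(\<lambda>m. inverse (fact m) * (M\<^sup>2) ^ m) \<longlonglongrightarrow> 0"
    by (rule summable_LIMSEQ_zero[OF summable_exp])
  then have "\<forall>\<^sub>F m in sequentially. inverse (fact m) * (M\<^sup>2) ^ m < 1 / (G * M ^ (2 * t))"
    using G M by (intro order_tendstoD(2)) auto
  then obtain N where N: "\<And>m. m \<ge> N \<Longrightarrow> G * M ^ (2 * t) * (M\<^sup>2) ^ m < fact m"
    using G M by (auto simp: eventually_sequentially field_simps)
  show ?thesis
    unfolding eventually_sequentially
  proof (intro exI allI impI)
    fix j assume j: "j \<ge> 2 * N + 2 * t + 2"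
    define k where "k = j div q + t"
    have "j div q \<le> j div 2"
      using q by (intro div_le_mono2) auto
    moreover have "2 * (j div 2) \<le> j"
      by simp
    ultimately have "2 * k \<le> j + 2 * t"
      by (simp add: k_def)
    then have kj: "k \<le> j" and Nk: "N \<le> j - k" and jk: "j \<le> 2 * (j - k) + 2 * t"
      using j by auto
    have "(1 / x) ^ k \<le> max 1 (1 / x) ^ k"
      using x by (intro power_mono) auto
    also have "\<dots> \<le> max 1 (1 / x) ^ j"
      using kj by (intro power_increasing) auto
    finally have "(real q * x) ^ j * (1 / x) ^ k \<le> max 1 (real q * x) ^ j * max 1 (1 / x) ^ j"
      using x by (intro mult_mono power_mono) auto
    also have "\<dots> = M ^ j"
      by (simp add: M_def power_mult_distrib)
    also have "\<dots> \<le> M ^ (2 * (j - k) + 2 * t)"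
      using M jk by (intro power_increasing) auto
    also have "\<dots> = M ^ (2 * t) * (M\<^sup>2) ^ (j - k)"
      by (simp add: power_add power_mult[symmetric] mult.commute)
    finally have "G * ((real q * x) ^ j / x ^ k) \<le> G * (M ^ (2 * t) * (M\<^sup>2) ^ (j - k))"
      using G by (intro mult_left_mono) (auto simp: power_divide)
    also have "\<dots> \<le> fact (j - k)"
      using N[OF Nk] by (simp add: mult.assoc)
    finally have GA: "G * ((real q * x) ^ j / x ^ k) \<le> fact (j - k)" .
    have "fact (j - k) * (G * poisson_term (real q * x) j)
        \<le> G * ((real q * x) ^ j / x ^ k * poisson_term x k)"
      using mult_left_mono[OF fact_diff_mult_poisson_term_le[OF kj _ x, of "real q * x"], of G] G x
      by (simp add: mult.left_commute)
    also have "\<dots> \<le> fact (j - k) * poisson_term x k"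
      using mult_right_mono[OF GA poisson_term_nonneg[of x k]] x by (simp add: mult.assoc)
    finally show "G * poisson_term (real q * x) j \<le> poisson_term x (j div q + t)"
      unfolding k_def by simp
  qed
qed

lemma poisson_term_compression_uniform:
  fixes x :: real
  assumes x: "x > 0" and q: "q \<ge> 2"
  obtains \<kappa> where "\<kappa> > 0" "\<And>j. \<kappa> * poisson_term (real q * x) j \<le> poisson_term x (j div q + t)"
proof -
  obtain J where J: "\<And>j. j \<ge> J \<Longrightarrow> poisson_term (real q * x) j \<le> poisson_term x (j div q + t)"
    using eventually_poisson_term_compression[OF x q, of 1 t] by (auto simp: eventually_sequentially)
  define ratio where "ratio j = poisson_term x (j div q + t) / poisson_term (real q * x) j" for j
  define \<kappa> where "\<kappa> = Min (insert 1 (ratio ` {..<J}))"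
  have pos: "poisson_term (real q * x) j > 0" for j
    using x q by (intro poisson_term_pos) auto
  have "\<kappa> > 0"
    unfolding \<kappa>_def ratio_def using pos x by (auto intro: divide_pos_pos poisson_term_pos)
  moreover have "\<kappa> * poisson_term (real q * x) j \<le> poisson_term x (j div q + t)" for j
  proof (cases "j < J")
    case True
    then have "\<kappa> \<le> ratio j"
      unfolding \<kappa>_def by (intro Min_le) auto
    then show ?thesis
      using pos[of j] by (simp add: ratio_def pos_le_divide_eq)
  next
    case False
    have "\<kappa> \<le> 1"
      unfolding \<kappa>_def by (intro Min_le) auto
    from mult_right_mono[OF this less_imp_le[OF pos[of j]]] show ?thesis
      using J[of j] False by simp
  qed
  ultimately show ?thesis
    using that by blast
qed

section \<open>Comparing sums\<close>

lemma sum_le_card_mult_sum_by_encoding: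
  fixes f :: "'a \<Rightarrow> real" and g :: "'b \<Rightarrow> real" and decode :: "'b \<Rightarrow> 't \<Rightarrow> 'a"
  assumes B: "finite B" and T: "finite T" and g: "\<And>b. b \<in> B \<Longrightarrow> g b \<ge> 0"
    and encode: "\<And>a. a \<in> A \<Longrightarrow> \<exists>b\<in>B. \<exists>t\<in>T. G * f a \<le> g b \<and> decode b t = a"
  shows "G * sum f A \<le> real (card T) * sum g B"
proof -
  obtain \<phi> \<tau> where \<phi>: "\<And>a. a \<in> A \<Longrightarrow>
      \<phi> a \<in> B \<and> \<tau> a \<in> T \<and> G * f a \<le> g (\<phi> a) \<and> decode (\<phi> a) (\<tau> a) = a"
    using encode by metis
  define enc where "enc a = (\<phi> a, \<tau> a)" for a
  have inj: "inj_on enc A"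
    by (rule inj_on_inverseI[of _ "case_prod decode"]) (use \<phi> in \<open>auto simp: enc_def\<close>)
  have enc_A: "enc ` A \<subseteq> B \<times> T"
    using \<phi> by (auto simp: enc_def)
  have "G * sum f A = (\<Sum>a\<in>A. G * f a)"
    by (simp add: sum_distrib_left)
  also have "\<dots> \<le> (\<Sum>a\<in>A. g (fst (enc a)))"
    using \<phi> by (intro sum_mono) (auto simp: enc_def)
  also have "\<dots> = (\<Sum>p\<in>enc ` A. g (fst p))"
    using inj by (simp add: sum.reindex)
  also have "\<dots> \<le> (\<Sum>p\<in>B \<times> T. g (fst p))"
    using enc_A B T g by (intro sum_mono2) auto
  also have "\<dots> = (\<Sum>b\<in>B. \<Sum>t\<in>T. g b)"
    by (simp only: sum.cartesian_product split_def)
  also have "\<dots> = real (card T) * sum g B"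
    by (simp add: sum_distrib_left)
  finally show ?thesis .
qed

lemma exists_coordinate_gt:
  fixes h :: "'a \<Rightarrow> real" and n :: "'a \<Rightarrow> nat"
  assumes "\<And>x. x \<in> X \<Longrightarrow> h x \<ge> 0" and "(\<Sum>x\<in>X. h x * n x) > L * (\<Sum>x\<in>X. h x)"
  shows "\<exists>x\<in>X. real (n x) > L"
proof (rule ccontr)
  assume "\<not> ?thesis"
  then have "(\<Sum>x\<in>X. h x * n x) \<le> (\<Sum>x\<in>X. h x * L)"
    using assms(1) by (intro sum_mono mult_left_mono) auto
  with assms(2) show False
    by (simp add: sum_distrib_left mult.commute)
qed

lemma sum_le_sum_of_cover:
  fixes f :: "'a \<Rightarrow> real"
  assumes "finite A" "finite B" "S \<subseteq> A \<union> B" "\<And>x. x \<in> A \<union> B \<Longrightarrow> f x \<ge> 0"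
  shows "sum f S \<le> sum f A + sum f B"
proof -
  have "sum f S \<le> sum f (A \<union> B)"
    using assms by (intro sum_mono2) auto
  also have "\<dots> \<le> sum f (A \<union> B) + sum f (A \<inter> B)"
    using assms(4) sum_nonneg[of "A \<inter> B" f] by auto
  also have "\<dots> = sum f A + sum f B"
    using assms by (intro sum.union_inter) auto
  finally show ?thesis .
qed

lemma divide_le_divide_of_scaled:
  fixes a b x y e :: real
  assumes "x > 0" "y > 0" "a \<ge> 0" "x \<le> e * y" "e * a \<le> b"
  shows "a / y \<le> b / x"
proof -
  have "a * x \<le> a * (e * y)"
    using assms by (intro mult_left_mono) auto
  also have "\<dots> \<le> b * y"
    using assms by (simp add: mult.assoc[symmetric] mult.commute[of a] mult_right_mono)
  finally show ?thesis
    using assms by (simp add: divide_simps)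
qed

section \<open>States, weights and blocking\<close>

lemma weight_eq_prod: "weight C r n = (\<Prod>x<C. poisson_term (r x) (n x))"
  by (simp add: weight_def poisson_term_def)

lemma weight_pos: "(\<And>x. x < C \<Longrightarrow> r x > 0) \<Longrightarrow> weight C r n > 0"
  by (auto simp: weight_eq_prod intro!: prod_pos poisson_term_pos)

lemma weight_fun_upd:
  assumes "k < C"
  shows "weight C r (n(k := v)) = poisson_term (r k) v * weight C r (n(k := 0))"
proof -
  have "(\<Prod>x\<in>{..<C} - {k}. poisson_term (r x) ((n(k := v)) x))
      = (\<Prod>x\<in>{..<C} - {k}. poisson_term (r x) ((n(k := 0)) x))"
    by (intro prod.cong) auto
  with assms show ?thesis
    by (simp add: weight_eq_prod prod.remove[of "{..<C}" k])
qed

lemma weight_param_upd: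
  assumes "k < C"
  shows "weight C (r(k := y)) n = poisson_term y (n k) * weight C r (n(k := 0))"
proof -
  have "(\<Prod>x\<in>{..<C} - {k}. poisson_term ((r(k := y)) x) (n x))
      = (\<Prod>x\<in>{..<C} - {k}. poisson_term (r x) ((n(k := 0)) x))"
    by (intro prod.cong) auto
  with assms show ?thesis
    by (simp add: weight_eq_prod prod.remove[of "{..<C}" k])
qed

lemma occupied_fun_upd:
  assumes "k < C"
  shows "occupied C h (n(k := v)) = h k * v + occupied C h (n(k := 0))"
proof -
  have "(\<Sum>x\<in>{..<C} - {k}. h x * (n(k := v)) x) = (\<Sum>x\<in>{..<C} - {k}. h x * (n(k := 0)) x)"
    by (intro sum.cong) auto
  with assms show ?thesis
    by (simp add: occupied_def sum.remove[of "{..<C}" k])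
qed

lemma occupied_param_upd:
  assumes "k < C"
  shows "occupied C (h(k := y)) n = y * n k + occupied C h (n(k := 0))"
proof -
  have "(\<Sum>x\<in>{..<C} - {k}. (h(k := y)) x * n x) = (\<Sum>x\<in>{..<C} - {k}. h x * (n(k := 0)) x)"
    by (intro sum.cong) auto
  with assms show ?thesis
    by (simp add: occupied_def sum.remove[of "{..<C}" k])
qed

lemma finite_state_space:
  assumes h: "\<And>x. x < C \<Longrightarrow> h x > 0"
  shows "finite (state_space C h W)"
proof -
  define N where "N = nat \<lceil>\<Sum>x<C. \<bar>W\<bar> / h x\<rceil>"
  have h_nonneg: "\<And>x. x < C \<Longrightarrow> h x \<ge> 0"
    using h less_imp_le by blast
  have "state_space C h W \<subseteq> {n. \<forall>x. (x \<in> {..<C} \<longrightarrow> n x \<in> {..N}) \<and> (x \<notin> {..<C} \<longrightarrow> n x = 0)}"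
  proof (intro subsetI CollectI allI conjI impI)
    fix n x assume n: "n \<in> state_space C h W" and x: "x \<in> {..<C}"
    have "h x * n x \<le> occupied C h n"
      unfolding occupied_def using x by (intro member_le_sum) (auto intro!: mult_nonneg_nonneg h_nonneg)
    also have "\<dots> \<le> \<bar>W\<bar>"
      using n by (auto simp: state_space_def)
    finally have "real (n x) \<le> \<bar>W\<bar> / h x"
      using h x by (simp add: field_simps)
    also have "\<dots> \<le> (\<Sum>x<C. \<bar>W\<bar> / h x)"
      using x by (intro member_le_sum) (auto intro!: divide_nonneg_nonneg h_nonneg)
    finally show "n x \<in> {..N}"
      unfolding N_def by (simp add: le_nat_iff le_ceiling_iff)
  qed (auto simp: state_space_def)
  moreover have "finite {n. \<forall>x. (x \<in> {..<C} \<longrightarrow> n x \<in> {..N}) \<and> (x \<notin> {..<C} \<longrightarrow> n x = (0::nat))}"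
    by (rule finite_set_of_finite_funs) auto
  ultimately show ?thesis
    by (rule finite_subset)
qed

definition blocked_set :: "nat \<Rightarrow> (nat \<Rightarrow> real) \<Rightarrow> real \<Rightarrow> nat \<Rightarrow> (nat \<Rightarrow> nat) set" where
  "blocked_set C h W c = {n \<in> state_space C h W. h c + occupied C h n > W}"

definition total_weight :: "nat \<Rightarrow> (nat \<Rightarrow> real) \<Rightarrow> (nat \<Rightarrow> real) \<Rightarrow> real \<Rightarrow> real" where
  "total_weight C h r W = (\<Sum>n\<in>state_space C h W. weight C r n)"

definition blocked_weight :: "nat \<Rightarrow> (nat \<Rightarrow> real) \<Rightarrow> (nat \<Rightarrow> real) \<Rightarrow> real \<Rightarrow> nat \<Rightarrow> real" where
  "blocked_weight C h r W c = (\<Sum>n\<in>blocked_set C h W c. weight C r n)"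

lemma blocking_prob_eq:
  "blocking_prob C c h s lam W
     = blocked_weight C h (\<lambda>k. lam k * s k) W c / total_weight C h (\<lambda>k. lam k * s k) W"
  by (simp add: blocking_prob_def blocked_weight_def total_weight_def blocked_set_def Let_def)

lemma mem_blocked_set_iff:
  "n \<in> blocked_set C h W c \<longleftrightarrow>
     (\<forall>x. C \<le> x \<longrightarrow> n x = 0) \<and> occupied C h n \<le> W \<and> W < h c + occupied C h n"
  by (auto simp: blocked_set_def state_space_def)

lemma finite_blocked_set: "(\<And>x. x < C \<Longrightarrow> h x > 0) \<Longrightarrow> finite (blocked_set C h W c)"
  unfolding blocked_set_def by (rule finite_subset[OF _ finite_state_space]) auto

lemma blocked_weight_nonneg: "(\<And>x. x < C \<Longrightarrow> r x > 0) \<Longrightarrow> blocked_weight C h r W c \<ge> 0"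
  unfolding blocked_weight_def by (intro sum_nonneg less_imp_le weight_pos)

lemma total_weight_pos:
  assumes "\<And>x. x < C \<Longrightarrow> h x > 0" "\<And>x. x < C \<Longrightarrow> r x > 0" "W \<ge> 0"
  shows "total_weight C h r W > 0"
proof -
  have "(\<lambda>_. 0) \<in> state_space C h W"
    using assms by (simp add: state_space_def occupied_def)
  then have "weight C r (\<lambda>_. 0) \<le> total_weight C h r W"
    unfolding total_weight_def using assms
    by (intro member_le_sum finite_state_space less_imp_le weight_pos) auto
  then show ?thesis
    by (simp add: weight_def)
qed

lemma sum_weight_fiber_le_exp:
  assumes "finite S" "i < C" "\<And>x. x < C \<Longrightarrow> r x > 0"
  shows "(\<Sum>n\<in>{n \<in> S. n(i := 0) = m}. weight C r n) \<le> exp (r i) * weight C r m"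
proof -
  let ?F = "{n \<in> S. n(i := 0) = m}"
  have weight: "weight C r n = poisson_term (r i) (n i) * weight C r (n(i := 0))" for n
    using weight_fun_upd[OF assms(2), of r n "n i"] by simp
  have "inj_on (\<lambda>n. n i) ?F"
    by (rule inj_on_inverseI[of _ "\<lambda>k. m(i := k)"]) auto
  then have "(\<Sum>n\<in>?F. poisson_term (r i) (n i)) = (\<Sum>k\<in>(\<lambda>n. n i) ` ?F. poisson_term (r i) k)"
    by (simp add: sum.reindex)
  also have "\<dots> \<le> exp (r i)"
    using assms less_imp_le[OF assms(3)[OF assms(2)]] by (intro sum_poisson_term_le_exp) auto
  finally have "(\<Sum>n\<in>?F. poisson_term (r i) (n i)) * weight C r m \<le> exp (r i) * weight C r m"
    using weight_pos[of C r m] assms(3) by (intro mult_right_mono) auto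
  moreover have "(\<Sum>n\<in>?F. weight C r n) = (\<Sum>n\<in>?F. poisson_term (r i) (n i)) * weight C r m"
    unfolding sum_distrib_right by (intro sum.cong refl, subst weight) auto
  ultimately show ?thesis
    by simp
qed

lemma total_weight_le_exp_mult:
  assumes h: "\<And>x. x < C \<Longrightarrow> h x > 0" and r: "\<And>x. x < C \<Longrightarrow> r x > 0"
    and i: "i < C" and q: "q > 0"
  shows "total_weight C h r W
    \<le> exp (r i) * total_weight C (h(i := h i / real q)) (r(i := real q * r i)) W"
proof -
  define S where "S = state_space C h W"
  define S' where "S' = state_space C (h(i := h i / real q)) W"
  define P where "P n = n(i := 0)" for n :: "nat \<Rightarrow> nat"
  have finite: "finite S" "finite S'"
    unfolding S_def S'_def using h q by (auto intro!: finite_state_space)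
  have weight': "weight C (r(i := real q * r i)) (P n) = weight C r (P n)" for n
    using weight_param_upd[OF i] by (simp add: P_def)
  have P_S: "P ` S \<subseteq> S'"
  proof safe
    fix n assume "n \<in> S"
    moreover have "occupied C (h(i := h i / real q)) (P n) \<le> occupied C h n"
      using occupied_fun_upd[OF i, of h n "n i"] occupied_param_upd[OF i, of h "h i / real q" "P n"] h[OF i]
      by (simp add: P_def)
    ultimately show "P n \<in> S'"
      by (auto simp: S_def S'_def state_space_def P_def)
  qed
  have "total_weight C h r W = (\<Sum>m\<in>P ` S. \<Sum>n\<in>{n\<in>S. P n = m}. weight C r n)"
    unfolding total_weight_def S_def[symmetric] using finite(1) by (rule sum.image_gen)
  also have "\<dots> \<le> (\<Sum>m\<in>P ` S. exp (r i) * weight C (r(i := real q * r i)) m)"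
    using sum_weight_fiber_le_exp[OF finite(1) i r] weight' by (intro sum_mono) (auto simp: P_def)
  also have "\<dots> \<le> (\<Sum>m\<in>S'. exp (r i) * weight C (r(i := real q * r i)) m)"
    using P_S finite(2) r q by (intro sum_mono2) (auto intro!: mult_nonneg_nonneg less_imp_le[OF weight_pos])
  finally show ?thesis
    by (simp add: total_weight_def S'_def sum_distrib_left)
qed

definition top_up :: "nat \<Rightarrow> (nat \<Rightarrow> real) \<Rightarrow> real \<Rightarrow> nat \<Rightarrow> (nat \<Rightarrow> nat) \<Rightarrow> nat \<Rightarrow> nat" where
  "top_up C h W c m = m(c := nat \<lfloor>(W - occupied C h (m(c := 0))) / h c\<rfloor>)"

lemma top_up_bounds:
  assumes "h c > 0" "occupied C h (m(c := 0)) \<le> W"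
  shows "h c * top_up C h W c m c \<le> W - occupied C h (m(c := 0))"
    and "W - occupied C h (m(c := 0)) < h c * top_up C h W c m c + h c"
proof -
  define R where "R = W - occupied C h (m(c := 0))"
  have top: "real (top_up C h W c m c) = of_int \<lfloor>R / h c\<rfloor>"
    using assms by (simp add: top_up_def R_def)
  have "h c * of_int \<lfloor>R / h c\<rfloor> \<le> h c * (R / h c)"
    using assms by (intro mult_left_mono) auto
  moreover have "h c * (R / h c) < h c * (of_int \<lfloor>R / h c\<rfloor> + 1)"
    using assms by (intro mult_strict_left_mono) linarith+
  moreover have "h c * (R / h c) = R"
    using assms by simp
  ultimately show "h c * top_up C h W c m c \<le> R" "R < h c * top_up C h W c m c + h c"
    using assms(1) unfolding top by (simp_all add: distrib_left)
qed

lemma top_up_mem_blocked_set: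
  assumes "c < C" "h c > 0" "\<forall>x. C \<le> x \<longrightarrow> m x = 0" "occupied C h (m(c := 0)) \<le> W"
  shows "top_up C h W c m \<in> blocked_set C h W c"
proof -
  have "occupied C h (top_up C h W c m) = h c * top_up C h W c m c + occupied C h (m(c := 0))"
    unfolding top_up_def by (subst occupied_fun_upd[OF assms(1)]) simp
  then show ?thesis
    using top_up_bounds[OF assms(2,4)] assms(1,3) by (auto simp: mem_blocked_set_iff top_up_def)
qed

section \<open>Refining one class\<close>

lemma real_Suc_le_mult_Suc_div:
  assumes "q > 0"
  shows "real j + 1 \<le> real q * (real (j div q) + 1)"
proof -
  have "real j = real q * real (j div q) + real (j mod q)"
    by (metis of_nat_add of_nat_mult mult_div_mod_eq)
  moreover have "real (j mod q) + 1 \<le> real q"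
    using mod_less_divisor[OF assms, of j] by (simp add: nat_less_real_le)
  ultimately show ?thesis
    unfolding distrib_left by linarith
qed

(* r stands for the loads rho = lam * s; h' and r' are the bandwidths and loads after the
   packets of class i are split into q times smaller and q times longer ones. *)
locale class_refinement =
  fixes C :: nat and h r :: "nat \<Rightarrow> real" and q i c :: nat
  assumes h_pos: "\<And>x. x < C \<Longrightarrow> h x > 0" and r_pos: "\<And>x. x < C \<Longrightarrow> r x > 0"
    and q_ge_2: "q \<ge> 2" and i_lt: "i < C" and c_lt: "c < C"
begin

abbreviation h' :: "nat \<Rightarrow> real" where
  "h' \<equiv> h(i := h i / real q)"

abbreviation r' :: "nat \<Rightarrow> real" where
  "r' \<equiv> r(i := real q * r i)"

definition rest_load :: "(nat \<Rightarrow> nat) \<Rightarrow> real" where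
  "rest_load n = occupied C h (n(i := 0, c := 0))"

definition rest_weight :: "(nat \<Rightarrow> nat) \<Rightarrow> real" where
  "rest_weight n = weight C r (n(i := 0, c := 0))"

lemma q_pos: "real q > 0"
  using q_ge_2 by simp

lemma h'_pos: "x < C \<Longrightarrow> h' x > 0"
  using h_pos q_pos by simp

lemma r'_pos: "x < C \<Longrightarrow> r' x > 0"
  using r_pos q_pos by simp

lemma rest_load_fun_upd_i [simp]: "rest_load (n(i := v)) = rest_load n"
  and rest_load_fun_upd_c [simp]: "rest_load (n(c := v)) = rest_load n"
  and rest_weight_fun_upd_i [simp]: "rest_weight (n(i := v)) = rest_weight n"
  and rest_weight_fun_upd_c [simp]: "rest_weight (n(c := v)) = rest_weight n"
  by (simp_all add: rest_load_def rest_weight_def fun_upd_twist)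

lemma rest_load_top_up [simp]: "rest_load (top_up C h W c m) = rest_load m"
  and rest_weight_top_up [simp]: "rest_weight (top_up C h W c m) = rest_weight m"
  by (simp_all add: top_up_def)

lemma rest_weight_pos: "rest_weight n > 0"
  unfolding rest_weight_def using r_pos by (rule weight_pos)

lemma rest_load_eq_sum: "rest_load n = (\<Sum>x\<in>{..<C} - {i, c}. h x * n x)"
  unfolding rest_load_def occupied_def by (rule sum.mono_neutral_cong_right) auto

lemma occupied_split:
  assumes "c \<noteq> i"
  shows "occupied C h n = h i * n i + h c * n c + rest_load n"
    and "occupied C h' n = h i / real q * n i + h c * n c + rest_load n"
proof -
  have "n(i := 0, c := n c) = n(i := 0)"
    using assms by (simp add: fun_eq_iff)
  then have "occupied C h (n(i := 0)) = h c * n c + rest_load n"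
    using occupied_fun_upd[OF c_lt, of h "n(i := 0)" "n c"] by (simp add: rest_load_def)
  then show "occupied C h n = h i * n i + h c * n c + rest_load n"
       "occupied C h' n = h i / real q * n i + h c * n c + rest_load n"
    using occupied_fun_upd[OF i_lt, of h n "n i"] occupied_param_upd[OF i_lt, of h _ n] by simp_all
qed

lemma occupied_split_same:
  assumes "c = i"
  shows "occupied C h n = h i * n i + rest_load n"
    and "occupied C h' n = h i / real q * n i + rest_load n"
  unfolding rest_load_def
  using occupied_fun_upd[OF i_lt, of h n "n i"] occupied_param_upd[OF i_lt, of h _ n] assms
  by simp_all

lemma weight_split:
  assumes "c \<noteq> i"
  shows "weight C r n = poisson_term (r i) (n i) * poisson_term (r c) (n c) * rest_weight n"
    and "weight C r' n = poisson_term (real q * r i) (n i) * poisson_term (r c) (n c) * rest_weight n"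
proof -
  have "n(i := 0, c := n c) = n(i := 0)"
    using assms by (simp add: fun_eq_iff)
  then have "weight C r (n(i := 0)) = poisson_term (r c) (n c) * rest_weight n"
    using weight_fun_upd[OF c_lt, of r "n(i := 0)" "n c"] by (simp add: rest_weight_def)
  then show "weight C r n = poisson_term (r i) (n i) * poisson_term (r c) (n c) * rest_weight n"
      "weight C r' n = poisson_term (real q * r i) (n i) * poisson_term (r c) (n c) * rest_weight n"
    using weight_fun_upd[OF i_lt, of r n "n i"] weight_param_upd[OF i_lt, of r _ n] by simp_all
qed

lemma weight_split_same:
  assumes "c = i"
  shows "weight C r n = poisson_term (r i) (n i) * rest_weight n"
    and "weight C r' n = poisson_term (real q * r i) (n i) * rest_weight n"
  unfolding rest_weight_def
  using weight_fun_upd[OF i_lt, of r n "n i"] weight_param_upd[OF i_lt, of r _ n] assms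
  by simp_all

lemma rest_load_decrement:
  assumes "x \<in> {..<C} - {i, c}" "n x \<ge> 1"
  shows "rest_load (n(x := n x - 1)) = rest_load n - h x"
proof -
  have x: "x < C" "x \<noteq> i" "x \<noteq> c"
    using assms by auto
  have "rest_load (n(x := v)) = h x * v + occupied C h ((n(i := 0, c := 0))(x := 0))" for v
    using occupied_fun_upd[OF x(1), of h "n(i := 0, c := 0)" v] x by (simp add: rest_load_def fun_upd_twist)
  from this[of "n x - 1"] this[of "n x"] show ?thesis
    using assms(2) by (simp add: of_nat_diff algebra_simps)
qed

lemma rest_weight_decrement:
  assumes "x \<in> {..<C} - {i, c}" "n x \<ge> 1"
  shows "r x * rest_weight (n(x := n x - 1)) = real (n x) * rest_weight n"
proof -
  have x: "x < C" "x \<noteq> i" "x \<noteq> c"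
    using assms by auto
  have "rest_weight (n(x := v)) = poisson_term (r x) v * weight C r ((n(i := 0, c := 0))(x := 0))" for v
    using weight_fun_upd[OF x(1), of r "n(i := 0, c := 0)" v] x by (simp add: rest_weight_def fun_upd_twist)
  from this[of "n x - 1"] this[of "n x"] show ?thesis
    using assms(2) poisson_term_Suc[of "n x - 1" "r x"] by simp
qed

lemma h'_le: "h' c \<le> h c"
  using h_pos[OF c_lt] q_ge_2 by (auto simp: field_simps)

lemma occupied'_bounds:
  assumes "n i \<le> B" "n c \<le> B"
  shows "rest_load n \<le> occupied C h' n"
    and "occupied C h' n \<le> (h i / real q + h c) * B + rest_load n"
proof -
  have "h i / real q * n i \<le> h i / real q * B"
    by (rule mult_left_mono) (use assms h_pos[OF i_lt] q_pos in auto)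
  moreover have "h c * n c \<le> h c * B"
    by (rule mult_left_mono) (use assms h_pos[OF c_lt] in auto)
  moreover have "h i / real q * n i \<ge> 0" "h c * n c \<ge> 0"
    using h_pos[OF i_lt] h_pos[OF c_lt] q_pos by simp_all
  ultimately show "rest_load n \<le> occupied C h' n"
      "occupied C h' n \<le> (h i / real q + h c) * B + rest_load n"
    by (cases "c = i"; simp add: occupied_split occupied_split_same distrib_right)+
qed

lemma weight_split_if:
  shows "weight C r n
      = poisson_term (r i) (n i) * (if c = i then 1 else poisson_term (r c) (n c)) * rest_weight n"
    and "weight C r' n
      = poisson_term (real q * r i) (n i) * (if c = i then 1 else poisson_term (r c) (n c)) * rest_weight n"
  by (cases "c = i"; simp add: weight_split weight_split_same)+

lemma weight'_upper_bound:
  assumes "n i \<le> B" "n c \<le> B"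
  shows "weight C r' n \<le> max 1 (real q * r i) ^ B * max 1 (r c) ^ B * rest_weight n"
proof -
  have ri: "poisson_term (real q * r i) (n i) \<le> max 1 (real q * r i) ^ B"
    using assms r_pos[OF i_lt] q_pos by (intro poisson_term_upper_bound) auto
  have rc: "(if c = i then 1 else poisson_term (r c) (n c)) \<le> max 1 (r c) ^ B"
    using assms r_pos[OF c_lt] by (auto intro: poisson_term_upper_bound)
  have "poisson_term (real q * r i) (n i) * (if c = i then 1 else poisson_term (r c) (n c))
      \<le> max 1 (real q * r i) ^ B * max 1 (r c) ^ B"
    using ri rc r_pos[OF c_lt] by (intro mult_mono) (auto intro: poisson_term_nonneg)
  then show ?thesis
    unfolding weight_split_if(2) by (rule mult_right_mono) (simp add: less_imp_le rest_weight_pos)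
qed

lemma weight_lower_bound:
  assumes "m i \<le> B" "m c \<le> B"
  shows "min 1 (r i) ^ B / fact B * (min 1 (r c) ^ B / fact B) * rest_weight m \<le> weight C r m"
proof -
  have ri: "min 1 (r i) ^ B / fact B \<le> poisson_term (r i) (m i)"
    using assms r_pos[OF i_lt] by (intro poisson_term_lower_bound) auto
  have "min 1 (r c) ^ B / fact B \<le> 1 / 1"
    using r_pos[OF c_lt] by (intro frac_le power_le_one) auto
  then have "min 1 (r c) ^ B / fact B \<le> (if c = i then 1 else poisson_term (r c) (m c))"
    using assms r_pos[OF c_lt] by (auto intro: poisson_term_lower_bound)
  then have "min 1 (r i) ^ B / fact B * (min 1 (r c) ^ B / fact B)
      \<le> poisson_term (r i) (m i) * (if c = i then 1 else poisson_term (r c) (m c))"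
    using ri r_pos[OF i_lt] r_pos[OF c_lt] by (intro mult_mono) (auto intro: poisson_term_nonneg)
  then show ?thesis
    unfolding weight_split_if(1) by (rule mult_right_mono) (simp add: less_imp_le rest_weight_pos)
qed

lemma scaled_div_bounds:
  shows "h i * real (j div q) \<le> h i / real q * real j"
    and "h i / real q * real j + h i / real q \<le> h i * real (j div q) + h i"
proof -
  have "real (j div q) \<le> real j / real q"
    by (rule of_nat_div_le_of_nat)
  from mult_left_mono[OF this less_imp_le[OF h_pos[OF i_lt]]]
  show "h i * real (j div q) \<le> h i / real q * real j"
    by simp
  have "h i / real q * (real j + 1) \<le> h i / real q * (real q * (real (j div q) + 1))"
    using h_pos[OF i_lt] q_pos real_Suc_le_mult_Suc_div[of q j] by (intro mult_left_mono) auto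
  moreover have "h i / real q * (real q * (real (j div q) + 1)) = h i * real (j div q) + h i"
    using q_pos by (simp add: field_simps)
  ultimately show "h i / real q * real j + h i / real q \<le> h i * real (j div q) + h i"
    by (simp add: distrib_left)
qed

definition refined_blocked_weight :: "real \<Rightarrow> ((nat \<Rightarrow> nat) \<Rightarrow> bool) \<Rightarrow> real" where
  "refined_blocked_weight W P = (\<Sum>n\<in>{n \<in> blocked_set C h' W c. P n}. weight C r' n)"

lemma blocked_weight'_eq: "blocked_weight C h' r' W c = refined_blocked_weight W (\<lambda>_. True)"
  by (simp add: refined_blocked_weight_def blocked_weight_def)

lemma refined_blocked_weight_cover:
  assumes "\<And>n. R n \<Longrightarrow> P n \<or> Q n"
  shows "refined_blocked_weight W R \<le> refined_blocked_weight W P + refined_blocked_weight W Q"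
proof -
  have "finite {n \<in> blocked_set C h' W c. S n}" for S
    using finite_blocked_set[of C h' W c] h'_pos by auto
  then show ?thesis
    unfolding refined_blocked_weight_def using assms r'_pos
    by (intro sum_le_sum_of_cover) (auto intro: less_imp_le[OF weight_pos])
qed

lemma refined_blocked_weight_le_by_encoding:
  fixes G :: real and decode :: "(nat \<Rightarrow> nat) \<Rightarrow> 't \<Rightarrow> nat \<Rightarrow> nat"
  assumes T: "finite T" "T \<noteq> {}"
    and encode: "\<And>n. n \<in> blocked_set C h' W c \<Longrightarrow> P n \<Longrightarrow> \<exists>b\<in>blocked_set C h W c. \<exists>t\<in>T.
                    G * card T * weight C r' n \<le> weight C r b \<and> decode b t = n"
  shows "G * refined_blocked_weight W P \<le> blocked_weight C h r W c"
proof -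
  have "G * card T * refined_blocked_weight W P \<le> real (card T) * blocked_weight C h r W c"
    unfolding blocked_weight_def refined_blocked_weight_def using T(1) encode h_pos r_pos
    by (intro sum_le_card_mult_sum_by_encoding) (auto intro: finite_blocked_set less_imp_le[OF weight_pos])
  moreover have "card T > 0"
    using T by (simp add: card_gt_0_iff)
  ultimately show ?thesis
    by (simp add: mult.commute mult.left_commute)
qed

lemma top_up_compressed:
  assumes other: "c \<noteq> i" and n: "n \<in> blocked_set C h' W c"
    and fits: "h i * k \<le> h i / real q * n i + h c * n c"
  defines "b \<equiv> top_up C h W c (n(i := k))"
  shows "b \<in> blocked_set C h W c"
    and "h c * b c + h i * k < h i / real q * n i + h c * n c + h c"
    and "h i / real q * n i + h c * n c < h c * b c + h i * k + h c"
    and "weight C r b = poisson_term (r i) k * poisson_term (r c) (b c) * rest_weight n"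
proof -
  have load: "occupied C h ((n(i := k))(c := 0)) = h i * k + rest_load n"
    using occupied_split(1)[OF other, of "(n(i := k))(c := 0)"] other by simp
  have occ': "h i / real q * n i + h c * n c + rest_load n \<le> W"
      "W < h c + (h i / real q * n i + h c * n c + rest_load n)"
    using n other by (auto simp: mem_blocked_set_iff occupied_split(2)[OF other])
  then have fit: "occupied C h ((n(i := k))(c := 0)) \<le> W"
    using fits load by linarith
  show "b \<in> blocked_set C h W c"
    unfolding b_def using n i_lt c_lt h_pos fit
    by (intro top_up_mem_blocked_set) (auto simp: mem_blocked_set_iff)
  show "h c * b c + h i * k < h i / real q * n i + h c * n c + h c"
      "h i / real q * n i + h c * n c < h c * b c + h i * k + h c"
    using top_up_bounds[OF h_pos[OF c_lt] fit] occ' load unfolding b_def[symmetric] by linarith+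
  show "weight C r b = poisson_term (r i) k * poisson_term (r c) (b c) * rest_weight n"
    using other by (simp add: weight_split(1)[OF other] b_def top_up_def)
qed

lemma refined_blocked_large_i_same:
  assumes same: "c = i"
  shows "\<exists>J0. \<forall>W. G * refined_blocked_weight W (\<lambda>n. J0 \<le> n i) \<le> blocked_weight C h r W c"
proof -
  obtain J0 where J0: "\<And>j. j \<ge> J0 \<Longrightarrow>
      G * real q * poisson_term (real q * r i) j \<le> poisson_term (r i) (j div q)"
    using eventually_poisson_term_compression[OF r_pos[OF i_lt] q_ge_2, of "G * real q" 0]
    by (auto simp: eventually_sequentially)
  have "G * refined_blocked_weight W (\<lambda>n. J0 \<le> n i) \<le> blocked_weight C h r W c" for W
  proof (rule refined_blocked_weight_le_by_encoding[where T = "{..<q}" and decode = "\<lambda>b x. b(i := q * b i + x)"])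
    fix n assume n: "n \<in> blocked_set C h' W c" "J0 \<le> n i"
    define b where "b = n(i := n i div q)"
    have "h' c = h i / real q" "h c = h i"
      using same by simp_all
    then have "b \<in> blocked_set C h W c"
      using n scaled_div_bounds[of "n i"]
      by (auto simp: mem_blocked_set_iff occupied_split_same[OF same] b_def)
    moreover have "G * card {..<q} * weight C r' n \<le> weight C r b"
    proof -
      have "G * real q * poisson_term (real q * r i) (n i) * rest_weight n
          \<le> poisson_term (r i) (n i div q) * rest_weight n"
        using J0 n rest_weight_pos[of n] by (intro mult_right_mono) auto
      then show ?thesis
        by (simp add: weight_split_same[OF same] b_def mult.assoc)
    qed
    moreover have "b(i := q * b i + n i mod q) = n"
      by (simp add: b_def)
    ultimately show "\<exists>b\<in>blocked_set C h W c. \<exists>t\<in>{..<q}.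
        G * card {..<q} * weight C r' n \<le> weight C r b \<and> b(i := q * b i + t) = n"
      using q_ge_2 by (intro bexI[of _ b] bexI[of _ "n i mod q"]) auto
  qed (use q_ge_2 in \<open>auto simp: lessThan_empty_iff\<close>)
  then show ?thesis
    by blast
qed

lemma refined_blocked_large_i_other:
  assumes other: "c \<noteq> i" and G: "G \<ge> 0"
  shows "\<exists>J0. \<forall>W. G * refined_blocked_weight W (\<lambda>n. n c < N0 \<and> J0 \<le> n i)
                   \<le> blocked_weight C h r W c"
proof -
  define B where "B = N0 + nat \<lceil>h i / h c\<rceil>"
  define Pmax where "Pmax = max 1 (r c) ^ N0"
  define Pmin where "Pmin = min 1 (r c) ^ B / fact B"
  define T where "T = {..<q} \<times> {..N0}"
  have ri: "r i > 0" and rc: "r c > 0" and hc: "h c > 0" and hi: "h i > 0"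
    using r_pos h_pos i_lt c_lt by auto
  have Pmin: "Pmin > 0"
    using rc by (simp add: Pmin_def)
  obtain J0 where J0: "\<And>j. j \<ge> J0 \<Longrightarrow>
      G * card T * Pmax / Pmin * poisson_term (real q * r i) j \<le> poisson_term (r i) (j div q)"
    using eventually_poisson_term_compression[OF ri q_ge_2, of "G * card T * Pmax / Pmin" 0]
    by (auto simp: eventually_sequentially)
  have "G * refined_blocked_weight W (\<lambda>n. n c < N0 \<and> J0 \<le> n i) \<le> blocked_weight C h r W c" for W
  proof (rule refined_blocked_weight_le_by_encoding[where T = T
        and decode = "\<lambda>b (x, z). b(i := q * b i + x, c := z)"])
    fix n assume n: "n \<in> blocked_set C h' W c" "n c < N0 \<and> J0 \<le> n i"
    define k where "k = n i div q"
    define b where "b = top_up C h W c (n(i := k))"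
    have "h i * k \<le> h i / real q * n i + h c * n c"
      using scaled_div_bounds(1)[of "n i"] hc unfolding k_def
      by (simp add: add_increasing2)
    note b = top_up_compressed[OF other n(1) this, folded b_def]
    have "h c * b c < h c * n c + h c + h i"
      using b(2) scaled_div_bounds(2)[of "n i"] divide_pos_pos[OF hi q_pos] unfolding k_def
      by linarith
    then have "real (b c) < real (n c) + 1 + h i / h c"
      using hc by (simp add: field_simps)
    moreover have "real (n c) + 1 \<le> real N0"
      using n by (simp add: nat_less_real_le)
    moreover have "h i / h c \<le> real (nat \<lceil>h i / h c\<rceil>)"
      by (rule real_nat_ceiling_ge)
    ultimately have "b c \<le> B"
      unfolding B_def by linarith
    have "G * card T * weight C r' n
        = G * card T * poisson_term (real q * r i) (n i) * poisson_term (r c) (n c) * rest_weight n"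
      by (simp add: weight_split(2)[OF other] mult_ac)
    also have "\<dots> \<le> G * card T * poisson_term (real q * r i) (n i) * Pmax * rest_weight n"
      unfolding Pmax_def using n G ri q_pos rest_weight_pos[of n]
      by (intro mult_right_mono mult_left_mono poisson_term_upper_bound[OF rc])
        (auto intro!: mult_nonneg_nonneg poisson_term_nonneg)
    also have "\<dots> = (G * card T * Pmax / Pmin * poisson_term (real q * r i) (n i)) * Pmin * rest_weight n"
      using Pmin by (simp add: field_simps)
    also have "\<dots> \<le> poisson_term (r i) k * poisson_term (r c) (b c) * rest_weight n"
      unfolding k_def using J0 n \<open>b c \<le> B\<close> Pmin rest_weight_pos[of n] ri
      by (intro mult_right_mono mult_mono)
        (auto simp: Pmin_def intro: poisson_term_lower_bound[OF rc] poisson_term_nonneg)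
    also have "\<dots> = weight C r b"
      by (rule b(4)[symmetric])
    finally have "G * card T * weight C r' n \<le> weight C r b" .
    moreover have "b(i := q * b i + n i mod q, c := n c) = n"
      using other by (auto simp: b_def top_up_def k_def fun_eq_iff)
    ultimately show "\<exists>b\<in>blocked_set C h W c. \<exists>t\<in>T. G * card T * weight C r' n \<le> weight C r b \<and>
        (case t of (x, z) \<Rightarrow> b(i := q * b i + x, c := z)) = n"
      using b(1) n q_ge_2 by (intro bexI[of _ b] bexI[of _ "(n i mod q, n c)"]) (auto simp: T_def)
  qed (use q_ge_2 in \<open>auto simp: T_def lessThan_empty_iff\<close>)
  then show ?thesis
    by blast
qed

(* The s extra packets of class i force the refilled class c to lose at least one packet,
   and since n c is large, losing one multiplies the weight by n c / r c. *)
lemma top_up_shifted: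
  assumes other: "c \<noteq> i" and n: "n \<in> blocked_set C h' W c"
    and s: "h i * s \<ge> h c + h i" and large: "h c * r c + h i * s \<le> h c * n c"
    and \<kappa>: "\<kappa> > 0" "\<And>j. \<kappa> * poisson_term (real q * r i) j \<le> poisson_term (r i) (j div q + s)"
    and K: "K * r c \<le> \<kappa> * n c"
  defines "b \<equiv> top_up C h W c (n(i := n i div q + s))"
  shows "b \<in> blocked_set C h W c" and "b c < n c" and "h c * n c < h c * b c + h c + h i * s"
    and "K * weight C r' n \<le> weight C r b"
    and "b(i := q * (b i - s) + n i mod q, c := b c + 1 + (n c - b c - 1)) = n"
proof -
  have ri: "r i > 0" and rc: "r c > 0" and hc: "h c > 0" and hi: "h i > 0"
    using r_pos h_pos i_lt c_lt by auto
  define k where "k = n i div q + s"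
  have k: "h i * k \<le> h i / real q * n i + h i * s"
      "h i / real q * n i + h i * s \<le> h i * k + h i"
    using scaled_div_bounds[of "n i"] divide_pos_pos[OF hi q_pos] unfolding k_def
    by (simp_all add: distrib_left)
  then have fits: "h i * k \<le> h i / real q * n i + h c * n c"
    using large mult_pos_pos[OF hc rc] by linarith
  have "top_up C h W c (n(i := k)) = b"
    by (simp add: b_def k_def)
  note b = top_up_compressed[OF other n fits, unfolded this]
  show "b \<in> blocked_set C h W c"
    by (rule b(1))
  have "h c * b c < h c * n c"
    using b(2) k(2) s by linarith
  then show "b c < n c"
    using hc by simp
  show "h c * n c < h c * b c + h c + h i * s"
    using b(3) k(1) by linarith
  have "h c * r c < h c * (real (b c) + 1)"
    using b(3) k(1) large by (simp add: distrib_left)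
  then have "r c \<le> real (b c) + 1"
    using hc by simp
  with K \<kappa>(1) \<open>b c < n c\<close> have "K * poisson_term (r c) (n c) \<le> \<kappa> * poisson_term (r c) (b c)"
    by (intro poisson_term_drop_le[OF rc]) auto
  then have "poisson_term (real q * r i) (n i) * (K * poisson_term (r c) (n c)) * rest_weight n
      \<le> poisson_term (real q * r i) (n i) * (\<kappa> * poisson_term (r c) (b c)) * rest_weight n"
    using ri q_pos rest_weight_pos[of n]
    by (intro mult_right_mono mult_left_mono) (auto intro: poisson_term_nonneg)
  then have "K * weight C r' n
      \<le> poisson_term (real q * r i) (n i) * (\<kappa> * poisson_term (r c) (b c)) * rest_weight n"
    by (simp add: weight_split(2)[OF other] mult_ac)
  also have "\<dots> \<le> poisson_term (r i) k * poisson_term (r c) (b c) * rest_weight n"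
    unfolding k_def using \<kappa>(2)[of "n i"] rc rest_weight_pos[of n]
    by (simp add: mult_right_mono poisson_term_nonneg mult.assoc[symmetric] mult.commute[of _ \<kappa>])
  finally show "K * weight C r' n \<le> weight C r b"
    using b(4) by simp
  show "b(i := q * (b i - s) + n i mod q, c := b c + 1 + (n c - b c - 1)) = n"
    using other \<open>b c < n c\<close> by (auto simp: b_def top_up_def k_def fun_eq_iff)
qed

lemma refined_blocked_large_c:
  assumes other: "c \<noteq> i" and G: "G \<ge> 0"
  shows "\<exists>N0. \<forall>W. G * refined_blocked_weight W (\<lambda>n. N0 \<le> n c) \<le> blocked_weight C h r W c"
proof -
  have ri: "r i > 0" and rc: "r c > 0" and hc: "h c > 0" and hi: "h i > 0"
    using r_pos h_pos i_lt c_lt by auto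
  define s where "s = nat \<lceil>h c / h i\<rceil> + 1"
  define D where "D = nat \<lceil>h i * s / h c\<rceil> + 1"
  define T where "T = {..<q} \<times> {..<D}"
  obtain \<kappa> where \<kappa>: "\<kappa> > 0" "\<And>j. \<kappa> * poisson_term (real q * r i) j \<le> poisson_term (r i) (j div q + s)"
    using poisson_term_compression_uniform[OF ri q_ge_2] by blast
  define N0 where "N0 = nat \<lceil>G * card T * r c / \<kappa> + r c + h i * s / h c\<rceil>"
  have s: "h i * s \<ge> h c + h i"
    using hi real_nat_ceiling_ge[of "h c / h i"] by (simp add: s_def field_simps)
  have D: "h c + h i * s \<le> h c * D"
    using hc real_nat_ceiling_ge[of "h i * s / h c"] by (simp add: D_def field_simps)
  have "G * card T * r c / \<kappa> + r c + h i * s / h c \<le> N0"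
    unfolding N0_def by (rule real_nat_ceiling_ge)
  moreover have "G * card T * r c / \<kappa> \<ge> 0" "h i * s / h c \<ge> 0"
    using G rc \<kappa> hi hc by simp_all
  ultimately have "G * card T * r c / \<kappa> \<le> N0" "h i * s / h c \<le> N0 - r c"
    using rc by linarith+
  then have N0: "G * card T * r c \<le> \<kappa> * N0" "h c * r c + h i * s \<le> h c * N0"
    using \<kappa>(1) hc by (simp_all add: field_simps)
  have "G * refined_blocked_weight W (\<lambda>n. N0 \<le> n c) \<le> blocked_weight C h r W c" for W
  proof (rule refined_blocked_weight_le_by_encoding[where T = T
        and decode = "\<lambda>b (x, z). b(i := q * (b i - s) + x, c := b c + 1 + z)"])
    fix n assume n: "n \<in> blocked_set C h' W c" "N0 \<le> n c"
    have "h c * N0 \<le> h c * n c" "\<kappa> * N0 \<le> \<kappa> * n c"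
      using n(2) hc \<kappa>(1) by simp_all
    then have "h c * r c + h i * s \<le> h c * n c" "G * card T * r c \<le> \<kappa> * n c"
      using N0 by linarith+
    note b = top_up_shifted[OF other n(1) s this(1) \<kappa> this(2)]
    define b where "b = top_up C h W c (n(i := n i div q + s))"
    have "h c * n c < h c * (real (b c) + D)"
      using b(3) D unfolding b_def[symmetric] distrib_left by linarith
    then have "n c < b c + D"
      using hc by simp
    then show "\<exists>b\<in>blocked_set C h W c. \<exists>t\<in>T. G * card T * weight C r' n \<le> weight C r b \<and>
        (case t of (x, z) \<Rightarrow> b(i := q * (b i - s) + x, c := b c + 1 + z)) = n"
      using b[folded b_def] q_ge_2
      by (intro bexI[of _ b] bexI[of _ "(n i mod q, n c - b c - 1)"]) (auto simp: T_def)
  qed (use q_ge_2 in \<open>auto simp: T_def D_def lessThan_empty_iff\<close>)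
  then show ?thesis
    by blast
qed

lemma refined_blocked_rest_load_gt:
  assumes "n \<in> blocked_set C h' W c" "n i \<le> B" "n c \<le> B"
  shows "rest_load n \<le> W" and "W < h c + (h i / real q + h c) * B + rest_load n"
  using assms(1) occupied'_bounds[OF assms(2,3)] h'_le by (auto simp: mem_blocked_set_iff)

lemma top_up_remove_one:
  assumes n: "\<forall>y. C \<le> y \<longrightarrow> n y = 0" "rest_load n \<le> W"
    and x: "x \<in> {..<C} - {i, c}" "n x \<ge> 1"
  defines "b \<equiv> top_up C h W c ((n(x := n x - 1))(i := 0))"
  shows "b \<in> blocked_set C h W c"
    and "h c * b c \<le> W - rest_load n + h x"
    and "c \<noteq> i \<Longrightarrow> b i = 0"
    and "r x * rest_weight b = real (n x) * rest_weight n"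
    and "b(i := n i, c := n c, x := b x + 1) = n"
proof -
  have load: "occupied C h (((n(x := n x - 1))(i := 0))(c := 0)) = rest_load n - h x"
    using rest_load_decrement[of x n, OF x] by (simp add: rest_load_def)
  moreover have "h x > 0"
    using x(1) h_pos by simp
  ultimately have fit: "occupied C h (((n(x := n x - 1))(i := 0))(c := 0)) \<le> W"
    using n(2) by linarith
  show "b \<in> blocked_set C h W c"
    unfolding b_def using n(1) x(1) i_lt c_lt h_pos fit by (intro top_up_mem_blocked_set) auto
  show "h c * b c \<le> W - rest_load n + h x"
    using top_up_bounds(1)[OF h_pos[OF c_lt] fit] load by (simp add: b_def)
  show "c \<noteq> i \<Longrightarrow> b i = 0"
    by (simp add: b_def top_up_def)
  show "r x * rest_weight b = real (n x) * rest_weight n"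
    using rest_weight_decrement[of x n, OF x] by (simp add: b_def)
  show "b(i := n i, c := n c, x := b x + 1) = n"
    using x by (auto simp: b_def top_up_def fun_eq_iff)
qed

(* With n i and n c bounded and W large, some third class x holds more than L packets;
   removing one of them multiplies the weight by n x / r x. *)
lemma refined_blocked_small:
  assumes G: "G \<ge> 0"
  shows "\<exists>W0. \<forall>W\<ge>W0. G * refined_blocked_weight W (\<lambda>n. n i \<le> B \<and> n c \<le> B)
                        \<le> blocked_weight C h r W c"
proof -
  define X where "X = {..<C} - {i, c}"
  define H where "H = (\<Sum>x\<in>X. h x)"
  define R where "R = (\<Sum>x\<in>X. r x)"
  define K where "K = h c + (h i / real q + h c) * B"
  define Bf where "Bf = nat \<lceil>(K + H) / h c\<rceil>"
  define Pmax where "Pmax = max 1 (real q * r i) ^ B * max 1 (r c) ^ B"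
  define Pmin where "Pmin = min 1 (r i) ^ Bf / fact Bf * (min 1 (r c) ^ Bf / fact Bf)"
  define T where "T = {..<C} \<times> {..B} \<times> {..B}"
  define L where "L = G * card T * Pmax * R / Pmin"
  have hc: "h c > 0"
    using h_pos c_lt by simp
  have hX: "0 < h x" "h x \<le> H" and rX: "0 < r x" "r x \<le> R" if "x \<in> X" for x
    using that h_pos r_pos unfolding X_def H_def R_def
    by (auto intro!: member_le_sum intro: less_imp_le)
  have Pmin: "Pmin > 0"
    using r_pos i_lt c_lt by (simp add: Pmin_def)
  have "R \<ge> 0"
    unfolding R_def using rX by (auto intro: sum_nonneg less_imp_le)
  then have L: "L \<ge> 0"
    unfolding L_def Pmax_def using G Pmin by (intro divide_nonneg_pos mult_nonneg_nonneg) auto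
  have "G * refined_blocked_weight W (\<lambda>n. n i \<le> B \<and> n c \<le> B) \<le> blocked_weight C h r W c"
    if W: "W \<ge> K + L * H" for W
  proof (rule refined_blocked_weight_le_by_encoding[where T = T
        and decode = "\<lambda>b (x, y, z). b(i := y, c := z, x := b x + 1)"])
    fix n assume n: "n \<in> blocked_set C h' W c" "n i \<le> B \<and> n c \<le> B"
    have supp: "\<forall>y. C \<le> y \<longrightarrow> n y = 0" and nB: "n i \<le> B" "n c \<le> B"
      using n by (auto simp: mem_blocked_set_iff)
    note rest_load = refined_blocked_rest_load_gt[OF n(1) nB]
    then have "rest_load n > L * H"
      using W unfolding K_def by linarith
    then obtain x where x: "x \<in> X" "real (n x) > L"
      using exists_coordinate_gt[of X h L n] hX unfolding rest_load_eq_sum X_def[symmetric] H_def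
      by (auto intro: less_imp_le)
    then have nx: "n x \<ge> 1"
      using L by linarith
    define b where "b = top_up C h W c ((n(x := n x - 1))(i := 0))"
    note b = top_up_remove_one[OF supp rest_load(1) x(1)[unfolded X_def] nx, folded b_def]
    have "h c * b c < K + H"
      using b(2) rest_load(2) hX[OF x(1)] unfolding K_def by linarith
    then have "real (b c) < (K + H) / h c"
      using hc by (simp add: pos_less_divide_eq mult.commute)
    then have "b c \<le> Bf"
      unfolding Bf_def by linarith
    moreover have "b i \<le> Bf"
      using \<open>b c \<le> Bf\<close> b(3) by (cases "c = i") auto
    ultimately have Pmin_le: "Pmin * rest_weight b \<le> weight C r b"
      unfolding Pmin_def by (intro weight_lower_bound)
    have "r x * (G * card T * weight C r' n) \<le> r x * (G * card T * (Pmax * rest_weight n))"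
      unfolding Pmax_def using n G rX[OF x(1)]
      by (intro mult_left_mono weight'_upper_bound) auto
    also have "\<dots> \<le> R * (G * card T * (Pmax * rest_weight n))"
      using rX[OF x(1)] G rest_weight_pos[of n]
      by (intro mult_right_mono) (auto simp: Pmax_def intro!: mult_nonneg_nonneg less_imp_le)
    also have "\<dots> = Pmin * L * rest_weight n"
      using Pmin by (simp add: L_def)
    also have "\<dots> \<le> Pmin * n x * rest_weight n"
      using x(2) Pmin rest_weight_pos[of n] by (intro mult_right_mono mult_left_mono) auto
    also have "\<dots> = r x * (Pmin * rest_weight b)"
      using b(4) by (simp add: mult_ac)
    also have "\<dots> \<le> r x * weight C r b"
      using Pmin_le rX[OF x(1)] by (intro mult_left_mono) auto
    finally have "G * card T * weight C r' n \<le> weight C r b"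
      using rX[OF x(1)] by simp
    then show "\<exists>b\<in>blocked_set C h W c. \<exists>t\<in>T. G * card T * weight C r' n \<le> weight C r b \<and>
        (case t of (x, y, z) \<Rightarrow> b(i := y, c := z, x := b x + 1)) = n"
      using b(1,5) n x(1) by (intro bexI[of _ b] bexI[of _ "(x, n i, n c)"]) (auto simp: T_def X_def)
  qed (use i_lt in \<open>auto simp: T_def\<close>)
  then show ?thesis
    by blast
qed

lemma blocked_weight_negligible:
  assumes G: "G \<ge> 0"
  shows "\<exists>W0. \<forall>W\<ge>W0. G * blocked_weight C h' r' W c \<le> blocked_weight C h r W c"
proof (cases "c = i")
  case True
  obtain J0 where J0: "\<And>W. 2 * G * refined_blocked_weight W (\<lambda>n. J0 \<le> n i) \<le> blocked_weight C h r W c"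
    using refined_blocked_large_i_same[OF True, of "2 * G"] by auto
  obtain W0 where W0: "\<And>W. W \<ge> W0 \<Longrightarrow>
      2 * G * refined_blocked_weight W (\<lambda>n. n i \<le> J0 \<and> n c \<le> J0) \<le> blocked_weight C h r W c"
    using refined_blocked_small[of "2 * G" J0] G by auto
  have "G * blocked_weight C h' r' W c \<le> blocked_weight C h r W c" if "W \<ge> W0" for W
  proof -
    have "G * blocked_weight C h' r' W c \<le> G * (refined_blocked_weight W (\<lambda>n. J0 \<le> n i)
        + refined_blocked_weight W (\<lambda>n. n i \<le> J0 \<and> n c \<le> J0))"
      unfolding blocked_weight'_eq using G True by (intro mult_left_mono refined_blocked_weight_cover) auto
    then show ?thesis
      using J0[of W] W0[OF that] by (simp add: distrib_left)
  qed
  then show ?thesis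
    by blast
next
  case False
  obtain N0 where N0: "\<And>W. 3 * G * refined_blocked_weight W (\<lambda>n. N0 \<le> n c) \<le> blocked_weight C h r W c"
    using refined_blocked_large_c[OF False, of "3 * G"] G by auto
  obtain J0 where J0: "\<And>W.
      3 * G * refined_blocked_weight W (\<lambda>n. n c < N0 \<and> J0 \<le> n i) \<le> blocked_weight C h r W c"
    using refined_blocked_large_i_other[OF False, of "3 * G" N0] G by auto
  define B where "B = J0 + N0"
  obtain W0 where W0: "\<And>W. W \<ge> W0 \<Longrightarrow>
      3 * G * refined_blocked_weight W (\<lambda>n. n i \<le> B \<and> n c \<le> B) \<le> blocked_weight C h r W c"
    using refined_blocked_small[of "3 * G" B] G by auto
  have "G * blocked_weight C h' r' W c \<le> blocked_weight C h r W c" if "W \<ge> W0" for W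
  proof -
    have "refined_blocked_weight W (\<lambda>_. True) \<le> refined_blocked_weight W (\<lambda>n. N0 \<le> n c)
        + refined_blocked_weight W (\<lambda>n. n c < N0 \<and> J0 \<le> n i \<or> n i \<le> B \<and> n c \<le> B)"
      by (rule refined_blocked_weight_cover) (auto simp: B_def)
    also have "\<dots> \<le> refined_blocked_weight W (\<lambda>n. N0 \<le> n c)
        + (refined_blocked_weight W (\<lambda>n. n c < N0 \<and> J0 \<le> n i)
          + refined_blocked_weight W (\<lambda>n. n i \<le> B \<and> n c \<le> B))"
      by (intro add_left_mono refined_blocked_weight_cover) auto
    finally have "G * blocked_weight C h' r' W c \<le> G * (refined_blocked_weight W (\<lambda>n. N0 \<le> n c)
        + (refined_blocked_weight W (\<lambda>n. n c < N0 \<and> J0 \<le> n i)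
          + refined_blocked_weight W (\<lambda>n. n i \<le> B \<and> n c \<le> B)))"
      unfolding blocked_weight'_eq using G by (intro mult_left_mono) auto
    then show ?thesis
      using N0[of W] J0[of W] W0[OF that] by (simp add: distrib_left)
  qed
  then show ?thesis
    by blast
qed

end

theorem theorem1:
  fixes C :: nat and h s lam :: "nat \<Rightarrow> real" and q i :: nat
  assumes "\<forall>c<C. lam c > 0" and "\<forall>c<C. h c > 0" and "\<forall>c<C. s c > 0"
    and "q > 0" and "i < C"
    and "lam i * s i < 1"
  shows "\<forall>c<C. \<exists>W0::real. \<forall>W>W0. W > 0 \<longrightarrow>
           blocking_prob C c h s lam W \<ge>
           blocking_prob C c (h(i := h i / real q)) (s(i := real q * s i)) lam W"
proof (intro allI impI)
  fix c assume c: "c < C"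
  define \<rho> where "\<rho> = (\<lambda>k. lam k * s k)"
  have \<rho>': "(\<lambda>k. lam k * (s(i := real q * s i)) k) = \<rho>(i := real q * \<rho> i)"
    by (auto simp: \<rho>_def)
  show "\<exists>W0. \<forall>W>W0. W > 0 \<longrightarrow> blocking_prob C c h s lam W \<ge>
      blocking_prob C c (h(i := h i / real q)) (s(i := real q * s i)) lam W"
  proof (cases "q = 1")
    case False
    then interpret class_refinement C h \<rho> q i c
      using assms c by unfold_locales (auto simp: \<rho>_def)
    obtain W0 where W0: "\<And>W. W \<ge> W0 \<Longrightarrow>
        exp (\<rho> i) * blocked_weight C h' r' W c \<le> blocked_weight C h \<rho> W c"
      using blocked_weight_negligible[of "exp (\<rho> i)"] by auto
    have "blocked_weight C h' r' W c / total_weight C h' r' W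
        \<le> blocked_weight C h \<rho> W c / total_weight C h \<rho> W" if W: "W > W0" "W > 0" for W
    proof (rule divide_le_divide_of_scaled)
      show "total_weight C h \<rho> W \<le> exp (\<rho> i) * total_weight C h' r' W"
        using h_pos r_pos i_lt assms(4) by (intro total_weight_le_exp_mult)
      show "exp (\<rho> i) * blocked_weight C h' r' W c \<le> blocked_weight C h \<rho> W c"
        using W by (intro W0) auto
    qed (use W h_pos r_pos h'_pos r'_pos in \<open>auto intro: total_weight_pos blocked_weight_nonneg\<close>)
    then show ?thesis
      unfolding blocking_prob_eq \<rho>' unfolding \<rho>_def[symmetric] by blast
  qed simp
qed

end
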